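(* Let $s,t\ge2$ and let $F=K^+_{s,t}$ be obtained from the complete bipartite graph $K_{s,t}$ by adding an edge inside the part of size $s$. Then $\rho_F=\hat\rho_F$.
   Context: Here $F$ is $2$-critical (i.e. $r=2$). A vertex $u$ of $F$ is critical if $\chi(F-u)=2$; $\mathrm{Aut}(F)$ is the number of automorphisms of $F$; for $\boldsymbol{\xi}\in\mathbb{R}^2$, $P_F(\boldsymbol{\xi})=\frac{1}{\mathrm{Aut}(F)}\sum_{u\text{ critical}}\sum_{\chi_u}\prod_{i=1}^2 2^{-x_i}\xi_i^{y_i}$, the inner sum over proper colorings $\chi_u:V(F)\setminus\{u\}\to[2]$ of $F-u$, with $y_i$ (resp. $x_i$) the number of neighbors (resp. non-neighbors other than $u$) of $u$ colored $i$. Let $c(n,F)$ be the minimum number of copies of $F$ in a graph obtained from the Turán graph $T_2(n)$ by adding one edge and $\alpha_F=\lim_n c(n,F)/n^{|V(F)|-2}$. Let $p(\rho)=\min\{P_F(\boldsymbol{\xi}):\boldsymbol{\xi}\in[0,1/2]^2,\xi_1+\xi_2=\rho\}$. If $P_F$ has total degree at least $3$: $\rho_F=\inf\{\rho\in(\frac12,1):p(\rho)\le\alpha_F(\rho-\frac12)\}$ and $\hat\rho_F=\inf\{\rho\in(\frac12,1):p(\rho)<\alpha_F(\rho-\frac12)\}$, each being $\infty$ if the corresponding set is empty; if $P_F$ has total degree $2$, both equal $\infty$. *)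

theory Defs
  imports Complex_Main "HOL-Library.FuncSet" "HOL-Library.Extended_Real"
begin

text \<open>Finite simple graphs are given by a vertex set V and a set E of 2-element
  subsets of V (edges).\<close>

definition proper_col :: "'a set \<Rightarrow> 'a set set \<Rightarrow> ('a \<Rightarrow> nat) \<Rightarrow> bool" where
  "proper_col V E c \<longleftrightarrow> (\<forall>e\<in>E. \<forall>x\<in>e. \<forall>y\<in>e. x \<noteq> y \<longrightarrow> c x \<noteq> c y)"

definition chromatic_number :: "'a set \<Rightarrow> 'a set set \<Rightarrow> nat" where
  "chromatic_number V E = (LEAST k. \<exists>c. (\<forall>v\<in>V. c v \<in> {1..k}) \<and> proper_col V E c)"

definition del_edges :: "'a set set \<Rightarrow> 'a \<Rightarrow> 'a set set" where
  "del_edges E u = {e \<in> E. u \<notin> e}"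

definition critical_vertex :: "'a set \<Rightarrow> 'a set set \<Rightarrow> 'a \<Rightarrow> bool" where
  "critical_vertex V E u \<longleftrightarrow> u \<in> V \<and> chromatic_number (V - {u}) (del_edges E u) = 2"

definition aut :: "'a set \<Rightarrow> 'a set set \<Rightarrow> nat" where
  "aut V E = card {f \<in> V \<rightarrow>\<^sub>E V. bij_betw f V V \<and>
      (\<forall>e. e \<subseteq> V \<longrightarrow> (e \<in> E \<longleftrightarrow> f ` e \<in> E))}"

definition colorings_u :: "'a set \<Rightarrow> 'a set set \<Rightarrow> 'a \<Rightarrow> ('a \<Rightarrow> nat) set" where
  "colorings_u V E u = {c \<in> (V - {u}) \<rightarrow>\<^sub>E {1, 2}. proper_col (V - {u}) (del_edges E u) c}"

definition ny :: "'a set \<Rightarrow> 'a set set \<Rightarrow> 'a \<Rightarrow> ('a \<Rightarrow> nat) \<Rightarrow> nat \<Rightarrow> nat" where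
  "ny V E u c i = card {v \<in> V - {u}. {u, v} \<in> E \<and> c v = i}"

definition nx :: "'a set \<Rightarrow> 'a set set \<Rightarrow> 'a \<Rightarrow> ('a \<Rightarrow> nat) \<Rightarrow> nat \<Rightarrow> nat" where
  "nx V E u c i = card {v \<in> V - {u}. {u, v} \<notin> E \<and> c v = i}"

definition P_F :: "'a set \<Rightarrow> 'a set set \<Rightarrow> real \<Rightarrow> real \<Rightarrow> real" where
  "P_F V E \<xi>1 \<xi>2 = (1 / real (aut V E)) *
     (\<Sum>u\<in>{u\<in>V. critical_vertex V E u}. \<Sum>c\<in>colorings_u V E u.
        (2 powr (- real (nx V E u c 1)) * \<xi>1 ^ ny V E u c 1) *
        (2 powr (- real (nx V E u c 2)) * \<xi>2 ^ ny V E u c 2))"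

text \<open>Total degree of P_F. All monomials have positive coefficients, so no cancellation
  occurs and the total degree is the maximal \<open>y1 + y2\<close> over all terms.\<close>
definition deg_P_F :: "'a set \<Rightarrow> 'a set set \<Rightarrow> nat" where
  "deg_P_F V E = Max {ny V E u c 1 + ny V E u c 2 | u c.
      critical_vertex V E u \<and> c \<in> colorings_u V E u}"

definition copies :: "'a set \<Rightarrow> 'a set set \<Rightarrow> 'b set \<Rightarrow> 'b set set \<Rightarrow> nat" where
  "copies VF EF VG EG = card {(f ` VF, (\<lambda>e. f ` e) ` EF) | f.
      inj_on f VF \<and> f ` VF \<subseteq> VG \<and> (\<forall>e\<in>EF. f ` e \<in> EG)}"

definition turan_V :: "nat \<Rightarrow> nat set" where
  "turan_V n = {..<n}"

definition turan_E :: "nat \<Rightarrow> nat set set" where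
  "turan_E n = {{i, j} | i j. i < n \<and> j < n \<and> (i < n div 2) \<noteq> (j < n div 2)}"

definition turan_nonedges :: "nat \<Rightarrow> nat set set" where
  "turan_nonedges n = {{i, j} | i j. i < n \<and> j < n \<and> i \<noteq> j \<and> {i, j} \<notin> turan_E n}"

definition c_nF :: "'a set \<Rightarrow> 'a set set \<Rightarrow> nat \<Rightarrow> nat" where
  "c_nF V E n = Min ((\<lambda>e. copies V E (turan_V n) (insert e (turan_E n))) ` turan_nonedges n)"

definition alpha_F :: "'a set \<Rightarrow> 'a set set \<Rightarrow> real" where
  "alpha_F V E = lim (\<lambda>n. real (c_nF V E n) / real n ^ (card V - 2))"

text \<open>p(\<rho>) = min of P_F over \<xi> \<in> [0,1/2]^2 with \<xi>1+\<xi>2 = \<rho> (the minimum is attained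
  for \<rho> \<in> (1/2,1), so it equals the infimum).\<close>
definition p_F :: "'a set \<Rightarrow> 'a set set \<Rightarrow> real \<Rightarrow> real" where
  "p_F V E \<rho> = Inf {P_F V E \<xi>1 \<xi>2 | \<xi>1 \<xi>2.
      0 \<le> \<xi>1 \<and> \<xi>1 \<le> 1/2 \<and> 0 \<le> \<xi>2 \<and> \<xi>2 \<le> 1/2 \<and> \<xi>1 + \<xi>2 = \<rho>}"

definition ereal_inf :: "real set \<Rightarrow> ereal" where
  "ereal_inf S = (if S = {} then \<infinity> else ereal (Inf S))"

definition rho_F :: "'a set \<Rightarrow> 'a set set \<Rightarrow> ereal" where
  "rho_F V E = (if deg_P_F V E \<ge> 3 then
      ereal_inf {\<rho>. 1/2 < \<rho> \<and> \<rho> < 1 \<and> p_F V E \<rho> \<le> alpha_F V E * (\<rho> - 1/2)}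
    else \<infinity>)"

definition rho_hat_F :: "'a set \<Rightarrow> 'a set set \<Rightarrow> ereal" where
  "rho_hat_F V E = (if deg_P_F V E \<ge> 3 then
      ereal_inf {\<rho>. 1/2 < \<rho> \<and> \<rho> < 1 \<and> p_F V E \<rho> < alpha_F V E * (\<rho> - 1/2)}
    else \<infinity>)"

definition Kplus_V :: "nat \<Rightarrow> nat \<Rightarrow> nat set" where
  "Kplus_V s t = {..<s + t}"

definition Kplus_E :: "nat \<Rightarrow> nat \<Rightarrow> nat set set" where
  "Kplus_E s t = {{a, b} | a b. a < s \<and> s \<le> b \<and> b < s + t} \<union> {{0, 1}}"

end

theory Submission
  imports Defs "HOL-Combinatorics.Permutations"
begin

text \<open>
  Only the endpoints \<open>0\<close>, \<open>1\<close> of the extra edge are critical, and each \<open>F - u\<close> has exactly two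
  proper 2-colourings, so \<open>P\<^sub>F(\<xi>) = K (\<xi>\<^sub>1 \<xi>\<^sub>2 ^ t + \<xi>\<^sub>1 ^ t \<xi>\<^sub>2)\<close> with \<open>K = 2 ^ (3 - s) / |Aut F|\<close>.
  A copy of \<open>F\<close> in \<open>T\<^sub>2(n)\<close> plus an edge must put \<open>{0, 1}\<close> onto the added edge, which gives
  \<open>\<alpha>\<^sub>F = 2 ^ (2 - s - t) / ((s - 2)! t!)\<close>, while permuting \<open>{0, 1}\<close> and the two remaining
  classes independently shows \<open>|Aut F| \<ge> 2 (s - 2)! t!\<close>.

  The two infima agree once every \<open>\<rho>\<close> with \<open>p(\<rho>) = \<alpha>\<^sub>F (\<rho> - 1/2)\<close> is a limit of points with
  strict inequality. Take a minimiser \<open>(x, y)\<close> of \<open>P\<^sub>F\<close> on the segment \<open>x + y = \<rho>\<close>. On the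
  boundary \<open>y = 1/2\<close> one decreases \<open>x\<close>. In the interior one rescales \<open>(x, y)\<close> to \<open>(c x, c y)\<close>:
  the gap \<open>P\<^sub>F - \<alpha>\<^sub>F (x + y - 1/2)\<close> becomes \<open>\<alpha>\<^sub>F ((\<rho> - 1/2) c ^ (t + 1) - \<rho> c + 1/2)\<close>, which
  vanishes at \<open>c = 1\<close> with nonzero derivative unless \<open>(t + 1)(\<rho> - 1/2) = \<rho>\<close>. For \<open>t \<ge> 4\<close> that
  level is excluded by the bound on \<open>|Aut F|\<close>, and for \<open>t \<le> 3\<close> no interior point is a minimiser.
\<close>

section \<open>The polynomial and its minimum on the segment \<open>x + y = \<rho>\<close>\<close>

definition kplus_poly :: "nat \<Rightarrow> real \<Rightarrow> real \<Rightarrow> real" where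
  "kplus_poly t x y = x * y ^ t + x ^ t * y"

definition segment_inf :: "(real \<Rightarrow> real \<Rightarrow> real) \<Rightarrow> real \<Rightarrow> real" where
  "segment_inf P \<rho> = Inf {P x y | x y. 0 \<le> x \<and> x \<le> 1/2 \<and> 0 \<le> y \<and> y \<le> 1/2 \<and> x + y = \<rho>}"

lemma p_F_eq_segment_inf: "p_F V E = segment_inf (P_F V E)"
  unfolding p_F_def segment_inf_def ..

lemma segment_inf_minimum:
  assumes "1/2 \<le> \<rho>" "\<rho> \<le> 1" and cont: "continuous_on {\<rho> - 1/2..1/2} (\<lambda>x. P x (\<rho> - x))"
  shows "\<exists>x0\<in>{\<rho> - 1/2..1/2}. segment_inf P \<rho> = P x0 (\<rho> - x0) \<and>
           (\<forall>x\<in>{\<rho> - 1/2..1/2}. P x0 (\<rho> - x0) \<le> P x (\<rho> - x))"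
proof -
  have segment: "{P x y | x y. 0 \<le> x \<and> x \<le> 1/2 \<and> 0 \<le> y \<and> y \<le> 1/2 \<and> x + y = \<rho>}
      = (\<lambda>x. P x (\<rho> - x)) ` {\<rho> - 1/2..1/2}"
    using assms(1,2)
    apply (auto simp: image_iff)
    subgoal for x y by (intro bexI[of _ x]) auto
    subgoal for x by (intro exI[of _ x] exI[of _ "\<rho> - x"]) auto
    done
  obtain x0 where x0: "x0 \<in> {\<rho> - 1/2..1/2}"
    and min: "\<And>x. x \<in> {\<rho> - 1/2..1/2} \<Longrightarrow> P x0 (\<rho> - x0) \<le> P x (\<rho> - x)"
    using continuous_attains_inf[OF compact_Icc _ cont] assms(1,2) by auto
  have "segment_inf P \<rho> = P x0 (\<rho> - x0)"
    unfolding segment_inf_def segment by (rule cInf_eq_minimum) (use x0 min in auto)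
  then show ?thesis using x0 min by blast
qed

lemma kplus_poly_corner_less:
  assumes t: "t = 2 \<or> t = 3" and x: "0 < x" "x < 1/2" and y: "0 < y" "y < 1/2" and "1/2 < x + y"
  shows "kplus_poly t (x + y - 1/2) (1/2) < kplus_poly t x y"
proof -
  define \<rho> where "\<rho> = x + y"
  define q where "q = (\<rho> - 1/2) / 2"
  \<comment> \<open>both sides are symmetric functions of the sum \<open>\<rho>\<close> and of the product, which is \<open>x y\<close>
      resp. \<open>q\<close>; moving to the corner keeps the sum and lowers the product\<close>
  have q_less: "q < x * y"
  proof -
    have "x * y - q = (1/2 - x) * (1/2 - y)" by (simp add: q_def \<rho>_def field_simps)
    moreover have "0 < (1/2 - x) * (1/2 - y)" using x y by simp
    ultimately show ?thesis by linarith
  qed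
  have xy_le: "x * y \<le> \<rho>\<^sup>2 / 4"
  proof -
    have "\<rho>\<^sup>2 / 4 - x * y = ((x - y) / 2)\<^sup>2" by (simp add: \<rho>_def power2_eq_square algebra_simps)
    then show ?thesis by (metis diff_ge_0_iff_ge zero_le_power2)
  qed
  show ?thesis using t
  proof
    assume t2: "t = 2"
    have "kplus_poly t x y = \<rho> * (x * y)"
      by (simp add: t2 kplus_poly_def \<rho>_def power2_eq_square algebra_simps)
    moreover have "kplus_poly t (x + y - 1/2) (1/2) = \<rho> * q"
      by (simp add: t2 kplus_poly_def \<rho>_def q_def power2_eq_square algebra_simps)
    moreover have "0 < \<rho>" using assms by (simp add: \<rho>_def)
    ultimately show ?thesis using q_less by simp
  next
    assume t3: "t = 3"
    have "kplus_poly t x y = (x * y) * (\<rho>\<^sup>2 - 2 * (x * y))"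
      by (simp add: t3 kplus_poly_def \<rho>_def power2_eq_square power3_eq_cube algebra_simps)
    moreover have "kplus_poly t (x + y - 1/2) (1/2) = q * (\<rho>\<^sup>2 - 2 * q)"
      by (simp add: t3 kplus_poly_def \<rho>_def q_def power2_eq_square power3_eq_cube field_simps)
    moreover have "(x * y) * (\<rho>\<^sup>2 - 2 * (x * y)) - q * (\<rho>\<^sup>2 - 2 * q)
        = (x * y - q) * (\<rho>\<^sup>2 - 2 * (x * y + q))"
      by (simp add: algebra_simps)
    moreover have "0 < (x * y - q) * (\<rho>\<^sup>2 - 2 * (x * y + q))"
      using q_less xy_le by (intro mult_pos_pos) auto
    ultimately show ?thesis by simp
  qed
qed

lemma neg_value_near_simple_zero:
  fixes f :: "real \<Rightarrow> real"
  assumes "DERIV f a :> d" "d \<noteq> 0" "f a = 0" "0 < \<delta>"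
  obtains c where "\<bar>c - a\<bar> < \<delta>" "f c < 0"
proof (cases "d < 0")
  case True
  obtain h where h: "0 < h" "\<And>x. 0 < x \<Longrightarrow> x < h \<Longrightarrow> f (a + x) < f a"
    using DERIV_neg_dec_right[OF assms(1) True] by blast
  show thesis
    using h(2)[of "min h \<delta> / 2"] h(1) assms(3,4) by (intro that[of "a + min h \<delta> / 2"]) auto
next
  case False
  then have "0 < d" using assms(2) by simp
  then obtain h where h: "0 < h" "\<And>x. 0 < x \<Longrightarrow> x < h \<Longrightarrow> f (a - x) < f a"
    using DERIV_pos_inc_left[OF assms(1)] by blast
  show thesis
    using h(2)[of "min h \<delta> / 2"] h(1) assms(3,4) by (intro that[of "a - min h \<delta> / 2"]) auto
qed

lemma abs_mult_diff_self_le: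
  fixes c z :: real
  assumes "0 \<le> z" "z \<le> 1"
  shows "\<bar>c * z - z\<bar> \<le> \<bar>c - 1\<bar>"
proof -
  have "c * z - z = (c - 1) * z" by (simp add: algebra_simps)
  then have "\<bar>c * z - z\<bar> = \<bar>c - 1\<bar> * z" using assms by (simp add: abs_mult)
  also have "\<dots> \<le> \<bar>c - 1\<bar>" using assms by (simp add: mult_left_le)
  finally show ?thesis .
qed

lemma ereal_inf_eq_of_dense_subset:
  fixes S T :: "real set"
  assumes "T \<subseteq> S" "bdd_below S" and dense: "\<And>\<rho> \<epsilon>. \<rho> \<in> S \<Longrightarrow> 0 < \<epsilon> \<Longrightarrow> \<exists>\<sigma>\<in>T. \<bar>\<sigma> - \<rho>\<bar> < \<epsilon>"
  shows "ereal_inf S = ereal_inf T"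
proof (cases "S = {}")
  case True
  then show ?thesis using assms(1) by (simp add: ereal_inf_def)
next
  case False
  then obtain \<rho>0 where "\<rho>0 \<in> S" by blast
  then have "T \<noteq> {}" using dense[of \<rho>0 1] by auto
  have "bdd_below T" by (rule bdd_below_mono[OF assms(2,1)])
  have "Inf T \<le> Inf S"
  proof (rule field_le_epsilon)
    fix e :: real assume "0 < e"
    obtain \<rho> where "\<rho> \<in> S" "\<rho> < Inf S + e/2"
      using cInf_lessD[OF False, of "Inf S + e/2"] \<open>0 < e\<close> by auto
    moreover obtain \<sigma> where "\<sigma> \<in> T" "\<bar>\<sigma> - \<rho>\<bar> < e/2" using dense[of \<rho> "e/2"] \<open>\<rho> \<in> S\<close> \<open>0 < e\<close> by auto
    moreover have "Inf T \<le> \<sigma>" by (rule cInf_lower[OF \<open>\<sigma> \<in> T\<close> \<open>bdd_below T\<close>])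
    ultimately show "Inf T \<le> Inf S + e" by linarith
  qed
  moreover have "Inf S \<le> Inf T" by (rule cInf_superset_mono[OF \<open>T \<noteq> {}\<close> assms(2,1)])
  ultimately show ?thesis using False \<open>T \<noteq> {}\<close> by (simp add: ereal_inf_def)
qed

section \<open>Strict inequality near every point of the level set\<close>

locale kplus_profile =
  fixes K \<alpha> :: real and t :: nat
  assumes K_pos: "0 < K" and t_ge_2: "2 \<le> t"
    and large_alpha: "4 \<le> t \<Longrightarrow> K * (real t + 1) * ((real t + 1) / (4 * real t)) ^ t < \<alpha>"
begin

definition P :: "real \<Rightarrow> real \<Rightarrow> real" where
  "P x y = K * kplus_poly t x y"

definition below_line :: "real \<Rightarrow> bool" where
  "below_line \<sigma> \<longleftrightarrow> 1/2 < \<sigma> \<and> \<sigma> < 1 \<and> segment_inf P \<sigma> < \<alpha> * (\<sigma> - 1/2)"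

lemma P_commute: "P x y = P y x"
  by (simp add: P_def kplus_poly_def algebra_simps)

lemma P_scale: "P (c * x) (c * y) = c ^ (t + 1) * P x y"
  by (simp add: P_def kplus_poly_def power_mult_distrib algebra_simps)

lemma P_pos: "0 < x \<Longrightarrow> 0 < y \<Longrightarrow> 0 < P x y"
  using K_pos by (simp add: P_def kplus_poly_def add_pos_pos)

lemma continuous_on_P_segment: "continuous_on S (\<lambda>z. P z (\<rho> - z))"
  unfolding P_def kplus_poly_def by (intro continuous_intros)

lemma segment_inf_P_minimum:
  assumes "1/2 \<le> \<rho>" "\<rho> \<le> 1"
  shows "\<exists>x0\<in>{\<rho> - 1/2..1/2}. segment_inf P \<rho> = P x0 (\<rho> - x0) \<and>
           (\<forall>x\<in>{\<rho> - 1/2..1/2}. P x0 (\<rho> - x0) \<le> P x (\<rho> - x))"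
  by (rule segment_inf_minimum[where P = P, OF assms continuous_on_P_segment])

lemma segment_inf_P_le:
  assumes "0 \<le> x" "x \<le> 1/2" "0 \<le> y" "y \<le> 1/2" "1/2 \<le> x + y"
  shows "segment_inf P (x + y) \<le> P x y"
proof -
  obtain x0 where "segment_inf P (x + y) = P x0 (x + y - x0)"
    and "\<forall>z\<in>{x + y - 1/2..1/2}. P x0 (x + y - x0) \<le> P z (x + y - z)"
    using segment_inf_P_minimum[of "x + y"] assms by auto
  moreover have "x \<in> {x + y - 1/2..1/2}" using assms by auto
  ultimately show ?thesis by fastforce
qed

lemma below_line_near_edge:
  assumes x0: "0 < x0" "x0 < 1/2" and level: "P x0 (1/2) = \<alpha> * x0" and "0 < \<epsilon>"
  shows "\<exists>\<sigma>. below_line \<sigma> \<and> \<bar>\<sigma> - (x0 + 1/2)\<bar> < \<epsilon>"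
proof -
  define x where "x = x0 - min (\<epsilon>/2) (x0/2)"
  have x: "0 < x" "x < x0" "x0 - x < \<epsilon>" using x0 \<open>0 < \<epsilon>\<close> by (auto simp: x_def min_def)
  \<comment> \<open>on the edge \<open>y = 1/2\<close>, the ratio \<open>P x (1/2) / x\<close> is strictly increasing in \<open>x\<close>\<close>
  define slope where "slope z = K * ((1/2) ^ t + z ^ (t - 1) / 2)" for z
  have edge: "P z (1/2) = z * slope z" for z
  proof -
    have "z ^ t = z * z ^ (t - 1)" using t_ge_2 by (simp add: power_eq_if)
    then show ?thesis by (simp add: P_def slope_def kplus_poly_def algebra_simps)
  qed
  have "x0 * slope x0 = x0 * \<alpha>" using level edge[of x0] by (simp add: mult.commute)
  then have "slope x0 = \<alpha>" using x0 by simp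
  moreover have "slope x < slope x0"
    using x t_ge_2 K_pos by (simp add: slope_def power_strict_mono)
  ultimately have "P x (1/2) < \<alpha> * x" using x edge[of x] by (simp add: mult.commute)
  moreover have "segment_inf P (x + 1/2) \<le> P x (1/2)"
    using segment_inf_P_le[of x "1/2"] x x0 by simp
  ultimately have "below_line (x + 1/2)" using x x0 by (simp add: below_line_def)
  then show ?thesis using x by (intro exI[of _ "x + 1/2"]) simp
qed

lemma below_line_near_scaling:
  assumes x0: "0 < x0" "x0 < 1/2" and y0: "0 < y0" "y0 < 1/2" and \<rho>: "1/2 < x0 + y0" "x0 + y0 < 1"
    and level: "P x0 y0 = \<alpha> * (x0 + y0 - 1/2)"
    and nonbalanced: "(real t + 1) * (x0 + y0 - 1/2) \<noteq> x0 + y0" and "0 < \<epsilon>"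
  shows "\<exists>\<sigma>. below_line \<sigma> \<and> \<bar>\<sigma> - (x0 + y0)\<bar> < \<epsilon>"
proof -
  define \<rho> where "\<rho> = x0 + y0"
  \<comment> \<open>along the ray through \<open>(x0, y0)\<close> the gap to the line is \<open>\<alpha> \<psi> c\<close>; \<open>\<psi>\<close> has a simple zero at \<open>1\<close>\<close>
  define \<psi> where "\<psi> c = (\<rho> - 1/2) * c ^ (t + 1) - \<rho> * c + 1/2" for c
  define \<delta> where "\<delta> = Min {\<epsilon>, 1/2 - x0, 1/2 - y0, 1 - \<rho>, \<rho> - 1/2}"
  have "0 < \<alpha>"
    using P_pos[OF x0(1) y0(1)] level \<rho> by (simp add: zero_less_mult_iff)
  have ray: "P (c * x0) (c * y0) - \<alpha> * (c * \<rho> - 1/2) = \<alpha> * \<psi> c" for c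
  proof -
    have "P (c * x0) (c * y0) = c ^ (t + 1) * (\<alpha> * (\<rho> - 1/2))"
      using level by (simp add: P_scale \<rho>_def)
    then show ?thesis by (simp add: \<psi>_def algebra_simps)
  qed
  have "DERIV \<psi> 1 :> (\<rho> - 1/2) * (real t + 1) - \<rho>"
    unfolding \<psi>_def by (auto intro!: derivative_eq_intros)
  moreover have "(\<rho> - 1/2) * (real t + 1) - \<rho> \<noteq> 0"
    using nonbalanced by (simp add: \<rho>_def algebra_simps)
  moreover have "\<psi> 1 = 0" by (simp add: \<psi>_def)
  moreover have "0 < \<delta>" using x0 y0 \<rho> \<open>0 < \<epsilon>\<close> by (simp add: \<delta>_def \<rho>_def)
  ultimately obtain c where c: "\<bar>c - 1\<bar> < \<delta>" "\<psi> c < 0"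
    by (rule neg_value_near_simple_zero)
  have "\<bar>c - 1\<bar> < \<epsilon>" "\<bar>c - 1\<bar> < 1/2 - x0" "\<bar>c - 1\<bar> < 1/2 - y0" "\<bar>c - 1\<bar> < 1 - \<rho>"
    "\<bar>c - 1\<bar> < \<rho> - 1/2"
    using c(1) by (auto simp: \<delta>_def)
  moreover note abs_mult_diff_self_le[of x0 c] abs_mult_diff_self_le[of y0 c] abs_mult_diff_self_le[of \<rho> c]
  ultimately have scaled: "0 < c" "c * x0 \<le> 1/2" "c * y0 \<le> 1/2" "1/2 < c * \<rho>" "c * \<rho> < 1"
    "\<bar>c * \<rho> - \<rho>\<bar> < \<epsilon>"
    using x0 y0 \<rho> by (auto simp: \<rho>_def abs_le_iff abs_less_iff)
  have "segment_inf P (c * \<rho>) \<le> P (c * x0) (c * y0)"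
    using segment_inf_P_le[of "c * x0" "c * y0"] scaled x0 y0
    by (simp add: \<rho>_def distrib_left)
  moreover have "P (c * x0) (c * y0) < \<alpha> * (c * \<rho> - 1/2)"
    using ray[of c] mult_pos_neg[OF \<open>0 < \<alpha>\<close> c(2)] by linarith
  ultimately have "below_line (c * \<rho>)" using scaled by (simp add: below_line_def)
  then show ?thesis using scaled(6) by (auto simp: \<rho>_def)
qed

lemma alpha_le_at_balanced_level:
  assumes \<rho>: "1/2 < \<rho>" "\<rho> < 1" and level: "segment_inf P \<rho> = \<alpha> * (\<rho> - 1/2)"
    and balanced: "(real t + 1) * (\<rho> - 1/2) = \<rho>"
  shows "\<alpha> \<le> K * (real t + 1) * ((real t + 1) / (4 * real t)) ^ t"
proof -
  have "\<alpha> * \<rho> = (real t + 1) * (\<alpha> * (\<rho> - 1/2))"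
    using balanced by (simp add: algebra_simps)
  also have "\<dots> \<le> (real t + 1) * P (\<rho>/2) (\<rho>/2)"
    using segment_inf_P_le[of "\<rho>/2" "\<rho>/2"] level \<rho> by simp
  also have "\<dots> = \<rho> * (K * (real t + 1) * (\<rho>/2) ^ t)"
    by (simp add: P_def kplus_poly_def algebra_simps)
  finally have "\<alpha> \<le> K * (real t + 1) * (\<rho>/2) ^ t" using \<rho> by simp
  moreover have "\<rho> / 2 = (real t + 1) / (4 * real t)"
    using balanced t_ge_2 by (simp add: field_simps)
  ultimately show ?thesis by simp
qed

lemma below_line_near_interior:
  assumes x0: "0 < x0" "x0 < 1/2" and y0: "0 < y0" "y0 < 1/2" and \<rho>: "1/2 < x0 + y0" "x0 + y0 < 1"
    and level: "segment_inf P (x0 + y0) = \<alpha> * (x0 + y0 - 1/2)"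
    and minimum: "segment_inf P (x0 + y0) = P x0 y0" and "0 < \<epsilon>"
  shows "\<exists>\<sigma>. below_line \<sigma> \<and> \<bar>\<sigma> - (x0 + y0)\<bar> < \<epsilon>"
proof (cases "t \<le> 3")
  case True
  then have "t = 2 \<or> t = 3" using t_ge_2 by auto
  then have "P (x0 + y0 - 1/2) (1/2) < P x0 y0"
    using kplus_poly_corner_less x0 y0 \<rho> K_pos by (simp add: P_def)
  moreover have "segment_inf P (x0 + y0) \<le> P (x0 + y0 - 1/2) (1/2)"
    using segment_inf_P_le[of "x0 + y0 - 1/2" "1/2"] x0 y0 \<rho> by simp
  ultimately show ?thesis using minimum by simp
next
  case False
  show ?thesis
  proof (rule below_line_near_scaling[OF x0 y0 \<rho> _ _ \<open>0 < \<epsilon>\<close>])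
    show "P x0 y0 = \<alpha> * (x0 + y0 - 1/2)" using level minimum by simp
    show "(real t + 1) * (x0 + y0 - 1/2) \<noteq> x0 + y0"
      using alpha_le_at_balanced_level[OF \<rho> level] large_alpha False by force
  qed
qed

lemma below_line_near:
  assumes \<rho>: "1/2 < \<rho>" "\<rho> < 1" and le: "segment_inf P \<rho> \<le> \<alpha> * (\<rho> - 1/2)" and "0 < \<epsilon>"
  shows "\<exists>\<sigma>. below_line \<sigma> \<and> \<bar>\<sigma> - \<rho>\<bar> < \<epsilon>"
proof (cases "segment_inf P \<rho> < \<alpha> * (\<rho> - 1/2)")
  case True
  then show ?thesis using \<rho> \<open>0 < \<epsilon>\<close> by (intro exI[of _ \<rho>]) (simp add: below_line_def)
next
  case False
  then have level: "segment_inf P \<rho> = \<alpha> * (\<rho> - 1/2)" using le by simp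
  obtain x0 where x0: "\<rho> - 1/2 \<le> x0" "x0 \<le> 1/2" and minimum: "segment_inf P \<rho> = P x0 (\<rho> - x0)"
    using segment_inf_P_minimum[of \<rho>] \<rho> by auto
  consider "x0 = \<rho> - 1/2" | "x0 = 1/2" | "\<rho> - 1/2 < x0" "x0 < 1/2" using x0 by linarith
  then show ?thesis
  proof cases
    case 1
    then show ?thesis
      using below_line_near_edge[of x0 \<epsilon>] level minimum \<rho> \<open>0 < \<epsilon>\<close> by auto
  next
    case 2
    then have "P (\<rho> - 1/2) (1/2) = \<alpha> * (\<rho> - 1/2)"
      using level minimum P_commute by metis
    then show ?thesis
      using below_line_near_edge[of "\<rho> - 1/2" \<epsilon>] \<rho> \<open>0 < \<epsilon>\<close> by auto
  next
    case 3
    then show ?thesis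
      using below_line_near_interior[of x0 "\<rho> - x0" \<epsilon>] level minimum \<rho> \<open>0 < \<epsilon>\<close>
      by auto
  qed
qed

lemma ereal_inf_level_sets_eq:
  shows "ereal_inf {\<rho>. 1/2 < \<rho> \<and> \<rho> < 1 \<and> segment_inf P \<rho> \<le> \<alpha> * (\<rho> - 1/2)}
       = ereal_inf {\<rho>. 1/2 < \<rho> \<and> \<rho> < 1 \<and> segment_inf P \<rho> < \<alpha> * (\<rho> - 1/2)}"
proof (rule ereal_inf_eq_of_dense_subset)
  show "bdd_below {\<rho>. 1/2 < \<rho> \<and> \<rho> < 1 \<and> segment_inf P \<rho> \<le> \<alpha> * (\<rho> - 1/2)}"
    by (rule bdd_belowI[of _ "1/2"]) simp
  show "\<exists>\<sigma>\<in>{\<rho>. 1/2 < \<rho> \<and> \<rho> < 1 \<and> segment_inf P \<rho> < \<alpha> * (\<rho> - 1/2)}. \<bar>\<sigma> - \<rho>\<bar> < \<epsilon>"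
    if "\<rho> \<in> {\<rho>. 1/2 < \<rho> \<and> \<rho> < 1 \<and> segment_inf P \<rho> \<le> \<alpha> * (\<rho> - 1/2)}" "0 < \<epsilon>" for \<rho> \<epsilon>
    using below_line_near[of \<rho> \<epsilon>] that by (auto simp: below_line_def)
qed auto

end

section \<open>Critical vertices, colourings and \<open>P\<^sub>F\<close> of \<open>K\<^sup>+\<^sub>s\<^sub>,\<^sub>t\<close>\<close>

definition colourable :: "'a set \<Rightarrow> 'a set set \<Rightarrow> nat \<Rightarrow> bool" where
  "colourable W D k \<longleftrightarrow> (\<exists>c. (\<forall>v\<in>W. c v \<in> {1..k}) \<and> proper_col W D c)"

lemma colourable_card:
  assumes "finite W" "\<And>e. e \<in> D \<Longrightarrow> e \<subseteq> W"
  shows "colourable W D (card W)"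
proof -
  obtain h where h: "bij_betw h W {0..<card W}" using ex_bij_betw_finite_nat[OF assms(1)] ..
  have "proper_col W D (Suc \<circ> h)"
    using assms(2) bij_betw_imp_inj_on[OF h] unfolding proper_col_def by (fastforce dest: inj_onD)
  moreover have "\<forall>v\<in>W. (Suc \<circ> h) v \<in> {1..card W}" using bij_betw_apply[OF h] by (auto simp: Suc_le_eq)
  ultimately show ?thesis unfolding colourable_def by blast
qed

lemma chromatic_number_eq_2_iff:
  assumes "finite W" "\<And>e. e \<in> D \<Longrightarrow> e \<subseteq> W"
  shows "chromatic_number W D = 2 \<longleftrightarrow> colourable W D 2 \<and> \<not> colourable W D 1"
proof -
  have chi: "chromatic_number W D = (LEAST k. colourable W D k)"
    unfolding chromatic_number_def colourable_def ..
  have empty_colourable: "colourable W D 1" if "colourable W D 0"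
    using that by (auto simp: colourable_def)
  show ?thesis
  proof
    assume "chromatic_number W D = 2"
    then show "colourable W D 2 \<and> \<not> colourable W D 1"
      using LeastI[of "colourable W D", OF colourable_card[OF assms]] not_less_Least[of 1 "colourable W D"]
      unfolding chi by auto
  next
    assume 2: "colourable W D 2 \<and> \<not> colourable W D 1"
    have "2 \<le> k" if "colourable W D k" for k
    proof (rule ccontr)
      assume "\<not> 2 \<le> k"
      then have "k = 0 \<or> k = 1" by auto
      then show False using that 2 empty_colourable by auto
    qed
    then show "chromatic_number W D = 2" unfolding chi using 2 by (intro Least_equality) auto
  qed
qed

lemma Kplus_edge_iff:
  "{u, v} \<in> Kplus_E s t \<longleftrightarrow>
     (u < s \<and> s \<le> v \<and> v < s + t) \<or> (v < s \<and> s \<le> u \<and> u < s + t) \<or>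
     (u = 0 \<and> v = 1) \<or> (u = 1 \<and> v = 0)"
  unfolding Kplus_E_def by (auto simp: doubleton_eq_iff)

lemma Kplus_edgeE:
  assumes "e \<in> Kplus_E s t"
  obtains a b where "e = {a, b}" "a < s" "s \<le> b" "b < s + t" | "e = {0, 1}"
  using assms unfolding Kplus_E_def by auto

lemma Kplus_edges_subset:
  assumes "2 \<le> s" "e \<in> Kplus_E s t"
  shows "e \<subseteq> Kplus_V s t"
  using assms(2) by (rule Kplus_edgeE) (use assms(1) in \<open>auto simp: Kplus_V_def\<close>)

lemma proper_col_del_edges_Kplus_iff:
  "proper_col W (del_edges (Kplus_E s t) u) c \<longleftrightarrow>
    (\<forall>a b. {a, b} \<in> Kplus_E s t \<longrightarrow> u \<noteq> a \<longrightarrow> u \<noteq> b \<longrightarrow> a \<noteq> b \<longrightarrow> c a \<noteq> c b)"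
  unfolding proper_col_def del_edges_def
  apply safe
   apply force
  apply (erule Kplus_edgeE; auto simp: Kplus_edge_iff)
  done

lemma not_colourable_del_Kplus:
  assumes s: "2 \<le> s" and t: "2 \<le> t" and u: "u \<noteq> 0" "u \<noteq> 1"
  shows "\<not> colourable (Kplus_V s t - {u}) (del_edges (Kplus_E s t) u) 2"
proof
  assume "colourable (Kplus_V s t - {u}) (del_edges (Kplus_E s t) u) 2"
  then obtain c where c: "\<forall>v\<in>Kplus_V s t - {u}. c v \<in> {1..2}"
    "proper_col (Kplus_V s t - {u}) (del_edges (Kplus_E s t) u) c"
    unfolding colourable_def by auto
  \<comment> \<open>\<open>0\<close>, \<open>1\<close> and a vertex of the part of size \<open>t\<close> form a triangle in \<open>F - u\<close>\<close>
  define b where "b = (if u = s then s + 1 else s)"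
  have b: "b \<noteq> u" "s \<le> b" "b < s + t" using t by (auto simp: b_def)
  have "c 0 \<noteq> c 1" "c 0 \<noteq> c b" "c 1 \<noteq> c b"
    using c(2) b u s unfolding proper_col_del_edges_Kplus_iff by (auto simp: Kplus_edge_iff)
  moreover have "c 0 \<in> {1..2}" "c 1 \<in> {1..2}" "c b \<in> {1..2}"
    using c(1) b u s by (auto simp: Kplus_V_def)
  ultimately show False by auto
qed

lemma colourable_del_Kplus_endpoint:
  assumes s: "2 \<le> s" and t: "2 \<le> t" and u: "u = 0 \<or> u = 1"
  shows "colourable (Kplus_V s t - {u}) (del_edges (Kplus_E s t) u) 2"
    and "\<not> colourable (Kplus_V s t - {u}) (del_edges (Kplus_E s t) u) 1"
proof -
  let ?W = "Kplus_V s t - {u}" and ?D = "del_edges (Kplus_E s t) u"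
  have "proper_col ?W ?D (\<lambda>v. if v < s then 1 else 2)"
    using u unfolding proper_col_del_edges_Kplus_iff by (auto simp: Kplus_edge_iff)
  then show "colourable ?W ?D 2"
    unfolding colourable_def by (intro exI[of _ "\<lambda>v. if v < s then 1 else 2"]) auto
  show "\<not> colourable ?W ?D 1"
  proof
    assume "colourable ?W ?D 1"
    then obtain c where c: "\<forall>v\<in>?W. c v \<in> {1..1}" "proper_col ?W ?D c"
      unfolding colourable_def by auto
    have "c (1 - u) \<noteq> c s"
      using c(2) u s t unfolding proper_col_del_edges_Kplus_iff by (auto simp: Kplus_edge_iff)
    moreover have "c (1 - u) = 1" "c s = 1" using c(1) u s t by (auto simp: Kplus_V_def)
    ultimately show False by simp
  qed
qed

lemma critical_vertex_Kplus_iff: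
  assumes s: "2 \<le> s" and t: "2 \<le> t"
  shows "critical_vertex (Kplus_V s t) (Kplus_E s t) u \<longleftrightarrow> u = 0 \<or> u = 1"
proof -
  let ?W = "Kplus_V s t - {u}" and ?D = "del_edges (Kplus_E s t) u"
  have "chromatic_number ?W ?D = 2 \<longleftrightarrow> colourable ?W ?D 2 \<and> \<not> colourable ?W ?D 1"
    by (rule chromatic_number_eq_2_iff)
      (use Kplus_edges_subset[OF s] in \<open>auto simp: del_edges_def Kplus_V_def\<close>)
  also have "\<dots> \<longleftrightarrow> u = 0 \<or> u = 1"
    using not_colourable_del_Kplus[OF s t] colourable_del_Kplus_endpoint[OF s t] by blast
  finally show ?thesis using s unfolding critical_vertex_def by (auto simp: Kplus_V_def)
qed

definition part_colouring :: "nat \<Rightarrow> nat \<Rightarrow> nat \<Rightarrow> nat \<Rightarrow> nat \<Rightarrow> nat" where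
  "part_colouring s t u j = restrict (\<lambda>v. if v < s then j else 3 - j) (Kplus_V s t - {u})"

lemma colorings_u_Kplus:
  assumes s: "2 \<le> s" and t: "2 \<le> t" and u: "u = 0 \<or> u = 1"
  shows "colorings_u (Kplus_V s t) (Kplus_E s t) u = {part_colouring s t u 1, part_colouring s t u 2}"
proof
  let ?W = "Kplus_V s t - {u}"
  define w where "w = 1 - u"
  have w: "w \<noteq> u" "w < s" "w \<in> ?W" using u s by (auto simp: w_def Kplus_V_def)
  show "colorings_u (Kplus_V s t) (Kplus_E s t) u \<subseteq> {part_colouring s t u 1, part_colouring s t u 2}"
  proof
    fix c assume "c \<in> colorings_u (Kplus_V s t) (Kplus_E s t) u"
    then have c: "c \<in> ?W \<rightarrow>\<^sub>E {1, 2}"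
      and proper: "\<And>a b. {a, b} \<in> Kplus_E s t \<Longrightarrow> u \<noteq> a \<Longrightarrow> u \<noteq> b \<Longrightarrow> a \<noteq> b \<Longrightarrow> c a \<noteq> c b"
      unfolding colorings_u_def proper_col_del_edges_Kplus_iff by auto
    have "s \<in> ?W" using u s t by (auto simp: Kplus_V_def)
    then have cw: "c w \<in> {1, 2}" "c s \<in> {1, 2}" "c w \<noteq> c s"
      using c w proper[of w s] u t by (auto simp: Kplus_edge_iff)
    \<comment> \<open>\<open>F - u\<close> is connected: every vertex is adjacent to \<open>w\<close> or to \<open>s\<close>\<close>
    define j where "j = c w"
    have "c v = part_colouring s t u j v" for v
    proof (cases "v \<in> ?W")
      case False
      then show ?thesis using c by (auto simp: part_colouring_def PiE_def extensional_def)
    next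
      case True
      have "c v \<in> {1, 2}" using c True by auto
      moreover have "v < s \<Longrightarrow> c v \<noteq> c s" using proper[of v s] True s t u by (auto simp: Kplus_edge_iff)
      moreover have "\<not> v < s \<Longrightarrow> c w \<noteq> c v"
        using proper[of w v] True w u by (auto simp: Kplus_edge_iff Kplus_V_def)
      ultimately show ?thesis using True cw by (auto simp: part_colouring_def j_def)
    qed
    moreover have "j = 1 \<or> j = 2" using cw by (auto simp: j_def)
    ultimately show "c \<in> {part_colouring s t u 1, part_colouring s t u 2}" by auto
  qed
  show "{part_colouring s t u 1, part_colouring s t u 2} \<subseteq> colorings_u (Kplus_V s t) (Kplus_E s t) u"
    unfolding colorings_u_def proper_col_del_edges_Kplus_iff using u
    by (auto simp: part_colouring_def Kplus_edge_iff Kplus_V_def)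
qed

lemma part_colourings_distinct:
  assumes "2 \<le> s" "u = 0 \<or> u = 1"
  shows "part_colouring s t u 1 \<noteq> part_colouring s t u 2"
proof -
  have "1 - u \<in> Kplus_V s t - {u}" "1 - u < s" using assms by (auto simp: Kplus_V_def)
  then have "part_colouring s t u 1 (1 - u) \<noteq> part_colouring s t u 2 (1 - u)"
    by (simp add: part_colouring_def)
  then show ?thesis by metis
qed

lemma Kplus_neighbour_iff:
  assumes "2 \<le> s" "u = 0 \<or> u = 1" "v \<in> Kplus_V s t - {u}"
  shows "{u, v} \<in> Kplus_E s t \<longleftrightarrow> v < 2 \<or> s \<le> v"
  using assms by (auto simp: Kplus_edge_iff Kplus_V_def)

lemma neighbour_counts_Kplus:
  assumes s: "2 \<le> s" and u: "u = 0 \<or> u = 1" and j: "j = 1 \<or> j = 2"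
  shows "ny (Kplus_V s t) (Kplus_E s t) u (part_colouring s t u j) j = 1"
    and "ny (Kplus_V s t) (Kplus_E s t) u (part_colouring s t u j) (3 - j) = t"
    and "nx (Kplus_V s t) (Kplus_E s t) u (part_colouring s t u j) j = s - 2"
    and "nx (Kplus_V s t) (Kplus_E s t) u (part_colouring s t u j) (3 - j) = 0"
proof -
  let ?V = "Kplus_V s t" and ?E = "Kplus_E s t" and ?c = "part_colouring s t u j"
  have "{v \<in> ?V - {u}. {u, v} \<in> ?E \<and> ?c v = j} = {1 - u}"
    using s u j by (auto simp: Kplus_neighbour_iff part_colouring_def Kplus_V_def)
  then show "ny ?V ?E u ?c j = 1" by (simp add: ny_def)
  have "{v \<in> ?V - {u}. {u, v} \<in> ?E \<and> ?c v = 3 - j} = {s..<s+t}"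
    using s u j by (auto simp: Kplus_neighbour_iff part_colouring_def Kplus_V_def)
  then show "ny ?V ?E u ?c (3 - j) = t" by (simp add: ny_def)
  have "{v \<in> ?V - {u}. {u, v} \<notin> ?E \<and> ?c v = j} = {2..<s}"
    using s u j by (auto simp: Kplus_neighbour_iff part_colouring_def Kplus_V_def)
  then show "nx ?V ?E u ?c j = s - 2" by (simp add: nx_def)
  have none: "{v \<in> ?V - {u}. {u, v} \<notin> ?E \<and> ?c v = 3 - j} = {}"
    using s u j by (auto simp: Kplus_neighbour_iff part_colouring_def Kplus_V_def)
  show "nx ?V ?E u ?c (3 - j) = 0" unfolding nx_def none by simp
qed

lemma two_powr_minus: "(2::real) powr (- real n) = (1/2) ^ n"
  by (simp add: powr_minus powr_realpow power_one_over inverse_eq_divide)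

lemma colouring_sum_Kplus:
  assumes s: "2 \<le> s" and t: "2 \<le> t" and u: "u = 0 \<or> u = 1"
  shows "(\<Sum>c\<in>colorings_u (Kplus_V s t) (Kplus_E s t) u.
      (2 powr (- real (nx (Kplus_V s t) (Kplus_E s t) u c 1)) * x ^ ny (Kplus_V s t) (Kplus_E s t) u c 1) *
      (2 powr (- real (nx (Kplus_V s t) (Kplus_E s t) u c 2)) * y ^ ny (Kplus_V s t) (Kplus_E s t) u c 2))
    = (1/2) ^ (s - 2) * kplus_poly t x y" (is "(\<Sum>c\<in>_. ?term c) = _")
proof -
  have split: "(\<Sum>c\<in>{part_colouring s t u 1, part_colouring s t u 2}. f c)
      = f (part_colouring s t u 1) + f (part_colouring s t u 2)" for f :: "(nat \<Rightarrow> nat) \<Rightarrow> real"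
    using part_colourings_distinct[OF s u, of t] by simp
  have "?term (part_colouring s t u 1) = (1/2) ^ (s - 2) * (x * y ^ t)"
    using neighbour_counts_Kplus[OF s u, of 1] by (simp add: two_powr_minus)
  moreover have "?term (part_colouring s t u 2) = (1/2) ^ (s - 2) * (x ^ t * y)"
    using neighbour_counts_Kplus[OF s u, of 2] by (simp add: two_powr_minus)
  ultimately show ?thesis
    unfolding colorings_u_Kplus[OF s t u] split by (simp add: kplus_poly_def algebra_simps)
qed

lemma P_F_Kplus:
  assumes s: "2 \<le> s" and t: "2 \<le> t"
  shows "P_F (Kplus_V s t) (Kplus_E s t) x y
     = 2 * (1/2) ^ (s - 2) / real (aut (Kplus_V s t) (Kplus_E s t)) * kplus_poly t x y"
proof -
  have critical: "{u \<in> Kplus_V s t. critical_vertex (Kplus_V s t) (Kplus_E s t) u} = {0, 1}"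
  proof -
    have "0 \<in> Kplus_V s t" "1 \<in> Kplus_V s t" using s by (auto simp: Kplus_V_def)
    then show ?thesis using critical_vertex_Kplus_iff[OF s t] by blast
  qed
  have split: "(\<Sum>u\<in>{0::nat, 1}. f u) = f 0 + f 1" for f :: "nat \<Rightarrow> real" by simp
  show ?thesis
    unfolding P_F_def critical split colouring_sum_Kplus[OF s t disjI1[OF refl]]
      colouring_sum_Kplus[OF s t disjI2[OF refl]]
    by simp
qed

section \<open>Automorphisms of \<open>K\<^sup>+\<^sub>s\<^sub>,\<^sub>t\<close>\<close>

lemma permutes_in_iff_in:
  assumes "q permutes B" "B \<subseteq> C \<or> B \<inter> C = {}"
  shows "q x \<in> C \<longleftrightarrow> x \<in> C"
proof (cases "x \<in> B")
  case True
  then have "q x \<in> B" using permutes_in_image[OF assms(1)] by blast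
  then show ?thesis using True assms(2) by blast
next
  case False
  then show ?thesis using permutes_not_in[OF assms(1)] by simp
qed

lemma permutes_compose_disjoint:
  assumes "p permutes A" "q permutes B"
  shows "p \<circ> q permutes A \<union> B"
  by (rule permutes_compose[OF permutes_subset[OF assms(2)] permutes_subset[OF assms(1)]]) auto

lemma inj_on_compose_permutes_disjoint:
  assumes "A \<inter> B = {}"
  shows "inj_on (\<lambda>(p, q). p \<circ> q) ({p. p permutes A} \<times> {q. q permutes B})"
proof (rule inj_onI, clarsimp)
  fix p q p' q'
  assume perm: "p permutes A" "q permutes B" "p' permutes A" "q' permutes B" and eq: "p \<circ> q = p' \<circ> q'"
  have "p x = p' x" for x
  proof (cases "x \<in> A")
    case True
    then have "q x = x" "q' x = x" using assms perm(2,4) by (auto intro: permutes_not_in)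
    then show ?thesis using fun_cong[OF eq, of x] by simp
  next
    case False
    then show ?thesis using perm(1,3) by (simp add: permutes_not_in)
  qed
  moreover have "q x = q' x" for x
  proof (cases "x \<in> B")
    case True
    then have "q x \<in> B" "q' x \<in> B" using perm(2,4) by (simp_all add: permutes_in_image)
    then have "p (q x) = q x" "p' (q' x) = q' x"
      using assms perm(1,3) by (auto intro: permutes_not_in)
    then show ?thesis using fun_cong[OF eq, of x] by simp
  next
    case False
    then show ?thesis using perm(2,4) by (simp add: permutes_not_in)
  qed
  ultimately show "p = p' \<and> q = q'" by auto
qed

lemma image_mem_iff_of_inj:
  assumes "inj q" "finite E" and into: "\<And>e. e \<in> E \<Longrightarrow> q ` e \<in> E"
  shows "q ` e \<in> E \<longleftrightarrow> e \<in> E"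
proof
  \<comment> \<open>\<open>e \<mapsto> q ` e\<close> is an injective self-map of the finite set \<open>E\<close>, hence onto\<close>
  have "(\<lambda>e. q ` e) ` E = E"
    using into \<open>inj q\<close> \<open>finite E\<close> by (intro endo_inj_surj) (auto simp: inj_on_def inj_image_eq_iff)
  moreover assume "q ` e \<in> E"
  ultimately obtain e' where "e' \<in> E" "q ` e = q ` e'" by (metis imageE)
  then show "e \<in> E" using \<open>inj q\<close> by (simp add: inj_image_eq_iff)
qed (rule into)

lemma card_le_aut:
  assumes "finite V" "finite E" and perm: "\<And>q. q \<in> Q \<Longrightarrow> q permutes V"
    and edges: "\<And>q e. q \<in> Q \<Longrightarrow> e \<in> E \<Longrightarrow> q ` e \<in> E"
  shows "card Q \<le> aut V E"
proof -
  let ?Aut = "{f \<in> V \<rightarrow>\<^sub>E V. bij_betw f V V \<and> (\<forall>e. e \<subseteq> V \<longrightarrow> (e \<in> E \<longleftrightarrow> f ` e \<in> E))}"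
  have mem: "restrict q V \<in> ?Aut" if q: "q \<in> Q" for q
  proof -
    have "e \<in> E \<longleftrightarrow> q ` e \<in> E" for e
      using image_mem_iff_of_inj[OF permutes_inj[OF perm[OF q]] \<open>finite E\<close> edges[OF q]] by blast
    moreover have "restrict q V ` e = q ` e" if "e \<subseteq> V" for e
      using that by (force simp: image_def)
    moreover have "restrict q V \<in> V \<rightarrow>\<^sub>E V" using perm[OF q] by (auto simp: permutes_in_image)
    moreover have "bij_betw (restrict q V) V V"
      using permutes_imp_bij[OF perm[OF q]] by simp
    ultimately show ?thesis by auto
  qed
  have inj: "inj_on (\<lambda>q. restrict q V) Q"
  proof (rule inj_onI)
    fix p q assume "p \<in> Q" "q \<in> Q" and eq: "restrict p V = restrict q V"
    have "p x = q x" for x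
    proof (cases "x \<in> V")
      case True
      then show ?thesis using fun_cong[OF eq, of x] by simp
    next
      case False
      then show ?thesis
        using permutes_not_in[OF perm[OF \<open>p \<in> Q\<close>]] permutes_not_in[OF perm[OF \<open>q \<in> Q\<close>]] by simp
    qed
    then show "p = q" ..
  qed
  have fin: "finite ?Aut"
    by (rule finite_subset[of _ "V \<rightarrow>\<^sub>E V"]) (use \<open>finite V\<close> in \<open>auto intro: finite_PiE\<close>)
  have "(\<lambda>q. restrict q V) ` Q \<subseteq> ?Aut" using mem by blast
  then have "card Q \<le> card ?Aut" by (rule card_inj_on_le[OF inj _ fin])
  then show ?thesis unfolding aut_def .
qed

lemma Kplus_edge_image:
  assumes "inj q" and parts: "\<And>x. q x \<in> {0, 1} \<longleftrightarrow> x \<in> {0, 1}" "\<And>x. q x < s \<longleftrightarrow> x < s"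
    "\<And>x. q x \<in> {s..<s+t} \<longleftrightarrow> x \<in> {s..<s+t}"
    and "e \<in> Kplus_E s t"
  shows "q ` e \<in> Kplus_E s t"
  using \<open>e \<in> Kplus_E s t\<close>
proof (cases rule: Kplus_edgeE)
  case (1 a b)
  then show ?thesis using parts(2)[of a] parts(3)[of b] by (auto simp: Kplus_edge_iff)
next
  case 2
  have "q 0 \<in> {0, 1}" "q 1 \<in> {0, 1}" "q 0 \<noteq> q 1"
    using parts(1) injD[OF \<open>inj q\<close>, of 0 1] by auto
  then have "q ` e = {0, 1}" using 2 by auto
  then show ?thesis by (simp add: Kplus_E_def)
qed

lemma Kplus_edge_image_block_permutation:
  assumes s: "2 \<le> s" and a: "a permutes {0, 1}" and b: "b permutes {2..<s}"
    and c: "c permutes {s..<s+t}" and "e \<in> Kplus_E s t"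
  shows "(a \<circ> (b \<circ> c)) ` e \<in> Kplus_E s t"
proof -
  let ?q = "a \<circ> (b \<circ> c)"
  have preserves: "?q x \<in> C \<longleftrightarrow> x \<in> C"
    if "{0, 1} \<subseteq> C \<or> {0, 1} \<inter> C = {}" "{2..<s} \<subseteq> C \<or> {2..<s} \<inter> C = {}"
      "{s..<s+t} \<subseteq> C \<or> {s..<s+t} \<inter> C = {}" for x C
    unfolding comp_apply using permutes_in_iff_in[OF a that(1)]
      permutes_in_iff_in[OF b that(2)] permutes_in_iff_in[OF c that(3)] by simp
  have "?q x \<in> {0, 1} \<longleftrightarrow> x \<in> {0, 1}" for x by (rule preserves) (use s in auto)
  moreover have "?q x \<in> {..<s} \<longleftrightarrow> x \<in> {..<s}" for x by (rule preserves) (use s in auto)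
  then have "?q x < s \<longleftrightarrow> x < s" for x by simp
  moreover have "?q x \<in> {s..<s+t} \<longleftrightarrow> x \<in> {s..<s+t}" for x by (rule preserves) (use s in auto)
  moreover have "inj ?q" using a b c by (intro inj_compose permutes_inj)
  ultimately show ?thesis using \<open>e \<in> Kplus_E s t\<close> by (intro Kplus_edge_image)
qed

lemma finite_Kplus_E:
  assumes "2 \<le> s"
  shows "finite (Kplus_E s t)"
proof (rule finite_subset)
  show "Kplus_E s t \<subseteq> Pow (Kplus_V s t)" using Kplus_edges_subset[OF assms] by blast
qed (simp add: Kplus_V_def)

lemma aut_Kplus_ge:
  assumes s: "2 \<le> s" and t: "2 \<le> t"
  shows "2 * fact (s - 2) * fact t \<le> aut (Kplus_V s t) (Kplus_E s t)"
proof -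
  \<comment> \<open>permute \<open>{0, 1}\<close>, the rest of the part of size \<open>s\<close>, and the part of size \<open>t\<close> independently\<close>
  define R where "R = (\<lambda>(b, c). b \<circ> c) ` ({b. b permutes {2..<s}} \<times> {c. c permutes {s..<s+t}})"
  define Q where "Q = (\<lambda>(a, r). a \<circ> r) ` ({a. a permutes {0::nat, 1}} \<times> R)"
  have split_V: "{0, 1} \<union> {2..<s+t} = Kplus_V s t" "{2..<s} \<union> {s..<s+t} = {2..<s+t}"
    using s by (auto simp: Kplus_V_def)
  have R_perm: "r permutes {2..<s+t}" if "r \<in> R" for r
    using that unfolding R_def split_V(2)[symmetric] by (auto intro: permutes_compose_disjoint)
  have "card R = fact (s - 2) * fact t"
    unfolding R_def by (subst card_image[OF inj_on_compose_permutes_disjoint])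
      (auto simp: card_cartesian_product card_permutations)
  moreover have "card Q = 2 * card R"
  proof -
    have "inj_on (\<lambda>(a, r). a \<circ> r) ({a. a permutes {0::nat, 1}} \<times> R)"
      by (rule inj_on_subset[OF inj_on_compose_permutes_disjoint[of "{0, 1}" "{2..<s+t}"]])
        (use R_perm in auto)
    moreover have "finite R" unfolding R_def by (simp add: finite_permutations)
    ultimately show ?thesis
      unfolding Q_def by (simp add: card_image card_cartesian_product card_permutations)
  qed
  moreover have "card Q \<le> aut (Kplus_V s t) (Kplus_E s t)"
  proof (rule card_le_aut)
    fix q assume "q \<in> Q"
    then obtain a r where q: "q = a \<circ> r" and a: "a permutes {0, 1}" and "r \<in> R"
      unfolding Q_def by auto
    then obtain b c where r: "r = b \<circ> c" and bc: "b permutes {2..<s}" "c permutes {s..<s+t}"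
      unfolding R_def by auto
    show "q permutes Kplus_V s t"
      unfolding q split_V(1)[symmetric] using a R_perm[OF \<open>r \<in> R\<close>] by (rule permutes_compose_disjoint)
    show "q ` e \<in> Kplus_E s t" if "e \<in> Kplus_E s t" for e
      unfolding q r using s a bc that by (rule Kplus_edge_image_block_permutation)
  qed (use finite_Kplus_E[OF s] in \<open>simp_all add: Kplus_V_def\<close>)
  ultimately show ?thesis by simp
qed

section \<open>Copies of \<open>K\<^sup>+\<^sub>s\<^sub>,\<^sub>t\<close> in the Turan graph plus an edge\<close>

lemma image_Kplus_E:
  "(\<lambda>d. f ` d) ` Kplus_E s t = insert {f 0, f 1} {{a, b} | a b. a \<in> f ` {..<s} \<and> b \<in> f ` {s..<s+t}}"
proof -
  have "(\<lambda>d. f ` d) ` {{a, b} | a b. a < s \<and> s \<le> b \<and> b < s + t}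
      = {{a, b} | a b. a \<in> f ` {..<s} \<and> b \<in> f ` {s..<s+t}}"
  proof (intro set_eqI iffI)
    fix z assume "z \<in> (\<lambda>d. f ` d) ` {{a, b} | a b. a < s \<and> s \<le> b \<and> b < s + t}"
    then show "z \<in> {{a, b} | a b. a \<in> f ` {..<s} \<and> b \<in> f ` {s..<s+t}}" by force
  next
    fix z assume "z \<in> {{a, b} | a b. a \<in> f ` {..<s} \<and> b \<in> f ` {s..<s+t}}"
    then obtain a b where "z = f ` {a, b}" "a < s" "s \<le> b" "b < s + t" by auto
    then show "z \<in> (\<lambda>d. f ` d) ` {{a, b} | a b. a < s \<and> s \<le> b \<and> b < s + t}" by blast
  qed
  then show ?thesis unfolding Kplus_E_def by simp
qed

text \<open>\<open>T\<^sub>2(n)\<close> plus a non-edge \<open>{x, y}\<close> is the complete bipartite graph between its parts \<open>X \<ni> x, y\<close>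
  and \<open>Y\<close>, plus \<open>{x, y}\<close>.\<close>

locale kplus_host =
  fixes s t :: nat and X Y :: "'b set" and x y :: 'b
  assumes s: "2 \<le> s" and t: "2 \<le> t" and finite: "finite X" "finite Y"
    and disjoint: "X \<inter> Y = {}" and xy: "x \<in> X" "y \<in> X" "x \<noteq> y"
begin

definition host_E :: "'b set set" where
  "host_E = insert {x, y} {{u, v} | u v. u \<in> X \<and> v \<in> Y}"

lemma not_in_both: "z \<in> X \<Longrightarrow> z \<in> Y \<Longrightarrow> False"
  using disjoint by blast

lemma host_edge_iff: "{u, v} \<in> host_E \<longleftrightarrow> {u, v} = {x, y} \<or> (u \<in> X \<and> v \<in> Y) \<or> (u \<in> Y \<and> v \<in> X)"
  unfolding host_E_def by (auto simp: doubleton_eq_iff)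

lemma Kplus_V_split: "Kplus_V s t = {0, 1} \<union> {2..<s} \<union> {s..<s+t}"
  using s by (auto simp: Kplus_V_def)

lemma embedding_parts:
  assumes inj: "inj_on f (Kplus_V s t)" and edges: "\<forall>d\<in>Kplus_E s t. f ` d \<in> host_E"
  shows "{f 0, f 1} = {x, y}" and "f ` {s..<s+t} \<subseteq> Y" and "f ` {2..<s} \<subseteq> X - {x, y}"
proof -
  have adj: "{f a, f b} \<in> host_E" if "{a, b} \<in> Kplus_E s t" for a b
    using edges that by force
  have dist: "f a \<noteq> f b" if "a < s + t" "b < s + t" "a \<noteq> b" for a b
    using inj_onD[OF inj] that by (auto simp: Kplus_V_def)
  show e01: "{f 0, f 1} = {x, y}"
  proof (rule ccontr)
    assume "{f 0, f 1} \<noteq> {x, y}"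
    then have cross: "f 0 \<in> X \<and> f 1 \<in> Y \<or> f 0 \<in> Y \<and> f 1 \<in> X"
      using adj[of 0 1] by (simp add: host_edge_iff Kplus_edge_iff)
    \<comment> \<open>a vertex of the part of size \<open>t\<close> cannot lie across from both \<open>f 0\<close> and \<open>f 1\<close>\<close>
    have touch: "f b \<in> {x, y} \<and> (f 0 \<in> {x, y} \<or> f 1 \<in> {x, y})" if "b \<in> {s..<s+t}" for b
    proof -
      have "{f 0, f b} \<in> host_E" "{f 1, f b} \<in> host_E"
        using adj that s by (auto simp: Kplus_edge_iff)
      then have "{f 0, f b} = {x, y} \<or> {f 1, f b} = {x, y}"
        using cross not_in_both unfolding host_edge_iff by blast
      then show ?thesis by (auto simp: doubleton_eq_iff)
    qed
    have "s \<in> {s..<s+t}" using t by simp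
    then have "f 0 \<in> {x, y} \<or> f 1 \<in> {x, y}" using touch by blast
    then obtain i where i: "i = 0 \<or> i = 1" "f i \<in> {x, y}" by blast
    moreover have "f s \<in> {x, y}" "f (s + 1) \<in> {x, y}" using touch t by simp_all
    moreover have "f i \<noteq> f s" "f i \<noteq> f (s + 1)" "f s \<noteq> f (s + 1)"
      using dist i(1) s t by auto
    ultimately show False by auto
  qed
  then have f01: "f 0 \<in> X" "f 1 \<in> X" using xy by (auto simp: doubleton_eq_iff)
  show part_t: "f ` {s..<s+t} \<subseteq> Y"
  proof
    fix v assume "v \<in> f ` {s..<s+t}"
    then obtain b where b: "b \<in> {s..<s+t}" "v = f b" by auto
    have "f b \<noteq> f 0" "f b \<noteq> f 1" using dist b s by auto
    then have "{f 0, f b} \<noteq> {x, y}" using e01 by (auto simp: doubleton_eq_iff)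
    moreover have "{f 0, f b} \<in> host_E" using adj b s by (auto simp: Kplus_edge_iff)
    moreover have "f 0 \<notin> Y" using f01(1) not_in_both by blast
    ultimately have "f b \<in> Y" unfolding host_edge_iff by blast
    then show "v \<in> Y" using b(2) by simp
  qed
  show "f ` {2..<s} \<subseteq> X - {x, y}"
  proof
    fix v assume "v \<in> f ` {2..<s}"
    then obtain a where a: "a \<in> {2..<s}" "v = f a" by auto
    have "f a \<noteq> f 0" "f a \<noteq> f 1" "f a \<noteq> f s" using dist a t by auto
    then have notin: "f a \<notin> {x, y}" and "{f a, f s} \<noteq> {x, y}"
      using e01 by (auto simp: doubleton_eq_iff)
    moreover have "f s \<in> Y" using part_t t by (simp add: image_subset_iff)
    then have "f s \<notin> X" using not_in_both by blast
    moreover have "{f a, f s} \<in> host_E" using adj a t by (auto simp: Kplus_edge_iff)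
    ultimately have "f a \<in> X" unfolding host_edge_iff by blast
    then show "v \<in> X - {x, y}" using notin a(2) by simp
  qed
qed

text \<open>A copy is determined by the images \<open>S\<close> of \<open>{2..<s}\<close> and \<open>B\<close> of the part of size \<open>t\<close>.\<close>

definition copy_data :: "('b set \<times> 'b set) set" where
  "copy_data = {S. S \<subseteq> X - {x, y} \<and> card S = s - 2} \<times> {B. B \<subseteq> Y \<and> card B = t}"

definition copy_of :: "'b set \<times> 'b set \<Rightarrow> 'b set \<times> 'b set set" where
  "copy_of = (\<lambda>(S, B). ({x, y} \<union> S \<union> B, insert {x, y} {{a, b} | a b. a \<in> {x, y} \<union> S \<and> b \<in> B}))"

definition copy_set :: "('b set \<times> 'b set set) set" where
  "copy_set = {(f ` Kplus_V s t, (\<lambda>d. f ` d) ` Kplus_E s t) | f.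
      inj_on f (Kplus_V s t) \<and> f ` Kplus_V s t \<subseteq> X \<union> Y \<and> (\<forall>d\<in>Kplus_E s t. f ` d \<in> host_E)}"

lemma copy_set_subset: "copy_set \<subseteq> copy_of ` copy_data"
proof
  fix z assume "z \<in> copy_set"
  then obtain f where z: "z = (f ` Kplus_V s t, (\<lambda>d. f ` d) ` Kplus_E s t)"
    and emb: "inj_on f (Kplus_V s t)" "f ` Kplus_V s t \<subseteq> X \<union> Y" "\<forall>d\<in>Kplus_E s t. f ` d \<in> host_E"
    unfolding copy_set_def by auto
  note parts = embedding_parts[OF emb(1,3)]
  define S where "S = f ` {2..<s}"
  define B where "B = f ` {s..<s+t}"
  have "inj_on f {2..<s}" "inj_on f {s..<s+t}"
    by (rule inj_on_subset[OF emb(1)]; auto simp: Kplus_V_def)+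
  then have "card S = s - 2" "card B = t" by (simp_all add: S_def B_def card_image)
  then have data: "(S, B) \<in> copy_data" using parts(2,3) by (simp add: copy_data_def S_def B_def)
  have split_A: "{..<s} = {0, 1} \<union> {2..<s}" using s by auto
  have f_A: "f ` {..<s} = {x, y} \<union> S"
    unfolding split_A image_Un image_insert image_empty parts(1) S_def ..
  have f_V: "f ` Kplus_V s t = {x, y} \<union> S \<union> B"
    unfolding Kplus_V_split image_Un image_insert image_empty parts(1) S_def B_def ..
  have "z = copy_of (S, B)"
    unfolding z copy_of_def image_Kplus_E f_A f_V parts(1) B_def[symmetric] by simp
  with data show "z \<in> copy_of ` copy_data" by blast
qed

lemma copy_of_subset: "copy_of ` copy_data \<subseteq> copy_set"
proof
  fix z assume "z \<in> copy_of ` copy_data"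
  then obtain S B where z: "z = copy_of (S, B)" and S: "S \<subseteq> X - {x, y}" "card S = s - 2"
    and B: "B \<subseteq> Y" "card B = t"
    unfolding copy_data_def by auto
  have "finite S" "finite B" using S(1) B(1) finite finite_subset by blast+
  obtain g where g: "bij_betw g {2..<s} S"
    using finite_same_card_bij[of "{2..<s}" S] \<open>finite S\<close> S(2) by auto
  obtain h where h: "bij_betw h {s..<s+t} B"
    using finite_same_card_bij[of "{s..<s+t}" B] \<open>finite B\<close> B(2) by auto
  define f where "f v = (if v = 0 then x else if v = 1 then y else if v < s then g v else h v)" for v
  have "f ` {2..<s} = g ` {2..<s}" "f ` {s..<s+t} = h ` {s..<s+t}"
    using s by (auto simp: f_def intro!: image_cong)
  then have parts: "f ` {2..<s} = S" "f ` {s..<s+t} = B"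
    using g h by (simp_all add: bij_betw_def)
  have "f 0 = x" "f 1 = y" by (simp_all add: f_def)
  moreover have "{..<s} = {0, 1} \<union> {2..<s}" using s by auto
  ultimately have f_A: "f ` {..<s} = {x, y} \<union> S" and f_V: "f ` Kplus_V s t = {x, y} \<union> S \<union> B"
    unfolding Kplus_V_split image_Un parts by (simp_all add: parts)
  have "card ({x, y} \<union> S \<union> B) = card (Kplus_V s t)"
  proof -
    have "{x, y} \<inter> S = {}" "({x, y} \<union> S) \<inter> B = {}" using S(1) B(1) xy disjoint by auto
    then show ?thesis
      using \<open>finite S\<close> \<open>finite B\<close> S(2) B(2) xy(3) s by (simp add: card_Un_disjoint Kplus_V_def)
  qed
  then have "card (f ` Kplus_V s t) = card (Kplus_V s t)" by (simp only: f_V)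
  then have "inj_on f (Kplus_V s t)" by (rule eq_card_imp_inj_on[rotated]) (simp add: Kplus_V_def)
  moreover have "f ` Kplus_V s t \<subseteq> X \<union> Y" using f_V S(1) B(1) xy by auto
  moreover have "f ` d \<in> host_E" if "d \<in> Kplus_E s t" for d
    using that
  proof (cases rule: Kplus_edgeE)
    case (1 a b)
    then have "f a \<in> {x, y} \<union> S" using f_A by (metis image_eqI lessThan_iff)
    moreover have "f b \<in> B" using parts(2) 1(3,4) by (metis atLeastLessThan_iff image_eqI)
    ultimately have "f a \<in> X" "f b \<in> Y" using S(1) B(1) xy by auto
    then show ?thesis using 1 by (simp add: host_edge_iff)
  qed (auto simp: f_def host_E_def)
  moreover have "z = (f ` Kplus_V s t, (\<lambda>d. f ` d) ` Kplus_E s t)"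
    unfolding z copy_of_def image_Kplus_E f_A f_V parts \<open>f 0 = x\<close> \<open>f 1 = y\<close> by simp
  ultimately show "z \<in> copy_set" unfolding copy_set_def by blast
qed

lemma inj_on_copy_of: "inj_on copy_of copy_data"
proof (rule inj_onI, clarify)
  fix S B S' B'
  assume "(S, B) \<in> copy_data" "(S', B') \<in> copy_data" and eq: "copy_of (S, B) = copy_of (S', B')"
  then have sub: "S \<subseteq> X - {x, y}" "B \<subseteq> Y" "S' \<subseteq> X - {x, y}" "B' \<subseteq> Y"
    by (auto simp: copy_data_def)
  have V: "{x, y} \<union> S \<union> B = {x, y} \<union> S' \<union> B'" using eq by (simp add: copy_of_def)
  have "B = ({x, y} \<union> S \<union> B) \<inter> Y" "B' = ({x, y} \<union> S' \<union> B') \<inter> Y"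
    using sub xy disjoint by blast+
  moreover have "S = ({x, y} \<union> S \<union> B) \<inter> (X - {x, y})" "S' = ({x, y} \<union> S' \<union> B') \<inter> (X - {x, y})"
    using sub disjoint by blast+
  ultimately show "S = S' \<and> B = B'" using V by metis
qed

lemma card_copy_data: "card copy_data = (card X - 2 choose (s - 2)) * (card Y choose t)"
proof -
  have "card (X - {x, y}) = card X - 2" using xy finite by (simp add: card_Diff_subset)
  then show ?thesis
    unfolding copy_data_def card_cartesian_product
    using n_subsets[of "X - {x, y}" "s - 2"] n_subsets[of Y t] finite by simp
qed

theorem copies_kplus_host:
  "copies (Kplus_V s t) (Kplus_E s t) (X \<union> Y) host_E = (card X - 2 choose (s - 2)) * (card Y choose t)"
proof -
  have "copy_set = copy_of ` copy_data" using copy_set_subset copy_of_subset by blast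
  then show ?thesis
    unfolding copies_def copy_set_def[symmetric] by (simp add: card_image inj_on_copy_of card_copy_data)
qed

end

lemma turan_E_iff:
  "{i, j} \<in> turan_E n \<longleftrightarrow> i < n \<and> j < n \<and> (i < n div 2) \<noteq> (j < n div 2)"
  unfolding turan_E_def by (auto simp: doubleton_eq_iff)

definition copy_count :: "nat \<Rightarrow> nat \<Rightarrow> nat \<Rightarrow> nat \<Rightarrow> nat" where
  "copy_count s t p q = (p - 2 choose (s - 2)) * (q choose t)"

lemma copies_Turan_plus_edge:
  assumes s: "2 \<le> s" and t: "2 \<le> t" and ij: "i < n" "j < n" "i \<noteq> j" "(i < n div 2) = (j < n div 2)"
  shows "copies (Kplus_V s t) (Kplus_E s t) (turan_V n) (insert {i, j} (turan_E n))
    = (if i < n div 2 then copy_count s t (n div 2) (n - n div 2)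
       else copy_count s t (n - n div 2) (n div 2))"
proof -
  define X where "X = {v. v < n \<and> (v < n div 2) = (i < n div 2)}"
  define Y where "Y = {v. v < n \<and> (v < n div 2) \<noteq> (i < n div 2)}"
  interpret kplus_host s t X Y i j
    using s t ij by unfold_locales (auto simp: X_def Y_def)
  have "turan_V n = X \<union> Y" by (auto simp: turan_V_def X_def Y_def)
  moreover have "turan_E n = {{u, v} | u v. u \<in> X \<and> v \<in> Y}"
    unfolding turan_E_def X_def Y_def by (auto simp: insert_commute)
  ultimately have count: "copies (Kplus_V s t) (Kplus_E s t) (turan_V n) (insert {i, j} (turan_E n))
      = (card X - 2 choose (s - 2)) * (card Y choose t)"
    using copies_kplus_host by (simp add: host_E_def)
  show ?thesis
  proof (cases "i < n div 2")
    case True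
    then have "X = {..<n div 2}" "Y = {n div 2..<n}" by (auto simp: X_def Y_def)
    then show ?thesis using count True by (simp add: copy_count_def)
  next
    case False
    then have "X = {n div 2..<n}" "Y = {..<n div 2}" by (auto simp: X_def Y_def)
    then show ?thesis using count False by (simp add: copy_count_def)
  qed
qed

lemma c_nF_Kplus:
  assumes s: "2 \<le> s" and t: "2 \<le> t" and n: "4 \<le> n"
  shows "c_nF (Kplus_V s t) (Kplus_E s t) n
    = min (copy_count s t (n div 2) (n - n div 2)) (copy_count s t (n - n div 2) (n div 2))"
proof -
  let ?h = "n div 2"
  let ?copies = "\<lambda>e. copies (Kplus_V s t) (Kplus_E s t) (turan_V n) (insert e (turan_E n))"
  have nonedges: "turan_nonedges n = {{i, j} | i j. i < n \<and> j < n \<and> i \<noteq> j \<and> (i < ?h) = (j < ?h)}"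
    unfolding turan_nonedges_def turan_E_iff by auto
  have "?copies ` turan_nonedges n = {copy_count s t ?h (n - ?h), copy_count s t (n - ?h) ?h}"
  proof
    show "?copies ` turan_nonedges n \<subseteq> {copy_count s t ?h (n - ?h), copy_count s t (n - ?h) ?h}"
      unfolding nonedges using copies_Turan_plus_edge[OF s t] by auto
    have "?copies {0, 1} = copy_count s t ?h (n - ?h)" "?copies {?h, ?h + 1} = copy_count s t (n - ?h) ?h"
      using copies_Turan_plus_edge[OF s t, of 0 n 1] copies_Turan_plus_edge[OF s t, of ?h n "?h + 1"] n
      by auto
    moreover have "{0, 1} \<in> turan_nonedges n" "{?h, ?h + 1} \<in> turan_nonedges n"
      unfolding nonedges using n by (fastforce, force)
    ultimately show "{copy_count s t ?h (n - ?h), copy_count s t (n - ?h) ?h} \<subseteq> ?copies ` turan_nonedges n"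
      by (metis empty_subsetI image_eqI insert_subset)
  qed
  then show ?thesis unfolding c_nF_def by simp
qed

section \<open>The constant \<open>\<alpha>\<^sub>F\<close>\<close>

lemma tendsto_binomial_over_power:
  fixes p :: "nat \<Rightarrow> nat"
  assumes lim: "(\<lambda>n. real (p n) / real n) \<longlonglongrightarrow> c"
  shows "(\<lambda>n. real (p n choose k) / real n ^ k) \<longlonglongrightarrow> c ^ k / fact k"
proof -
  have eq: "real (p n choose k) / real n ^ k = (\<Prod>i<k. real (p n) / real n - real i / real n) / fact k"
    if "1 \<le> n" for n
  proof -
    have "real (p n choose k) = (\<Prod>i<k. real (p n) - real i) / fact k"
      by (simp add: binomial_gbinomial gbinomial_prod_rev atLeast0LessThan)
    moreover have "(\<Prod>i<k. real (p n) / real n - real i / real n) = (\<Prod>i<k. real (p n) - real i) / real n ^ k"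
      by (simp add: prod_dividef flip: diff_divide_distrib)
    ultimately show ?thesis by simp
  qed
  have "(\<lambda>n. (\<Prod>i<k. real (p n) / real n - real i / real n) / fact k) \<longlonglongrightarrow> (\<Prod>i<k. c - 0) / fact k"
    by (intro tendsto_divide tendsto_prod tendsto_diff lim lim_const_over_n tendsto_const) auto
  then have "(\<lambda>n. (\<Prod>i<k. real (p n) / real n - real i / real n) / fact k) \<longlonglongrightarrow> c ^ k / fact k"
    by simp
  then show ?thesis
    by (rule Lim_transform_eventually) (use eq in \<open>auto simp: eventually_sequentially intro!: exI[of _ 1]\<close>)
qed

lemma tendsto_ratio_of_bounded_deviation:
  fixes p :: "nat \<Rightarrow> nat"
  assumes bound: "\<And>n. \<bar>real (p n) - c * real n\<bar> \<le> C"
  shows "(\<lambda>n. real (p n) / real n) \<longlonglongrightarrow> c"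
proof (rule tendsto_sandwich)
  have "c - C / real n \<le> real (p n) / real n \<and> real (p n) / real n \<le> c + C / real n" if "1 \<le> n" for n
  proof -
    have "c - C / real n = (c * real n - C) / real n" "c + C / real n = (c * real n + C) / real n"
      using that by (simp_all add: field_simps)
    moreover have "c * real n - C \<le> real (p n)" "real (p n) \<le> c * real n + C"
      using bound[of n] by (simp_all add: abs_le_iff)
    ultimately show ?thesis using that by (simp add: divide_right_mono)
  qed
  then show "\<forall>\<^sub>F n in sequentially. c - C / real n \<le> real (p n) / real n"
    and "\<forall>\<^sub>F n in sequentially. real (p n) / real n \<le> c + C / real n"
    unfolding eventually_sequentially by blast+
  show "(\<lambda>n. c - C / real n) \<longlonglongrightarrow> c" "(\<lambda>n. c + C / real n) \<longlonglongrightarrow> c"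
    using tendsto_diff[OF tendsto_const lim_const_over_n[of C]]
      tendsto_add[OF tendsto_const lim_const_over_n[of C]] by simp_all
qed

lemma alpha_F_Kplus:
  assumes s: "2 \<le> s" and t: "2 \<le> t"
  shows "alpha_F (Kplus_V s t) (Kplus_E s t) = (1/2) ^ (s - 2) / fact (s - 2) * ((1/2) ^ t / fact t)"
    (is "_ = ?\<alpha>")
proof -
  have half: "(\<lambda>n. real (p n) / real n) \<longlonglongrightarrow> 1/2"
    if "p = (\<lambda>n. n div 2) \<or> p = (\<lambda>n. n - n div 2) \<or> p = (\<lambda>n. n div 2 - 2) \<or> p = (\<lambda>n. n - n div 2 - 2)"
    for p
    by (rule tendsto_ratio_of_bounded_deviation[where C = 3]) (use that in auto)
  have count_limit: "(\<lambda>n. real (copy_count s t (p n) (q n)) / real n ^ (s - 2 + t)) \<longlonglongrightarrow> ?\<alpha>"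
    if "(\<lambda>n. real (p n - 2) / real n) \<longlonglongrightarrow> 1/2" "(\<lambda>n. real (q n) / real n) \<longlonglongrightarrow> 1/2" for p q
  proof -
    have "(\<lambda>n. real (p n - 2 choose (s - 2)) / real n ^ (s - 2) * (real (q n choose t) / real n ^ t))
        \<longlonglongrightarrow> ?\<alpha>"
      by (intro tendsto_mult tendsto_binomial_over_power that)
    then show ?thesis by (simp add: copy_count_def power_add)
  qed
  have "(\<lambda>n. min (real (copy_count s t (n div 2) (n - n div 2)) / real n ^ (s - 2 + t))
      (real (copy_count s t (n - n div 2) (n div 2)) / real n ^ (s - 2 + t))) \<longlonglongrightarrow> min ?\<alpha> ?\<alpha>"
    by (intro tendsto_min count_limit half) auto
  then have "(\<lambda>n. min (real (copy_count s t (n div 2) (n - n div 2)) / real n ^ (s - 2 + t))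
      (real (copy_count s t (n - n div 2) (n div 2)) / real n ^ (s - 2 + t))) \<longlonglongrightarrow> ?\<alpha>"
    by simp
  then have "(\<lambda>n. real (c_nF (Kplus_V s t) (Kplus_E s t) n) / real n ^ (card (Kplus_V s t) - 2)) \<longlonglongrightarrow> ?\<alpha>"
  proof (rule Lim_transform_eventually)
    have "card (Kplus_V s t) - 2 = s - 2 + t" using s by (simp add: Kplus_V_def)
    then show "\<forall>\<^sub>F n in sequentially.
        min (real (copy_count s t (n div 2) (n - n div 2)) / real n ^ (s - 2 + t))
          (real (copy_count s t (n - n div 2) (n div 2)) / real n ^ (s - 2 + t))
        = real (c_nF (Kplus_V s t) (Kplus_E s t) n) / real n ^ (card (Kplus_V s t) - 2)"
      unfolding eventually_sequentially
      by (intro exI[of _ 4] allI impI) (simp add: c_nF_Kplus[OF s t] of_nat_min min_divide_distrib_right)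
  qed
  then show ?thesis unfolding alpha_F_def by (rule limI)
qed

lemma three_mul_Suc_less_two_power: "4 \<le> n \<Longrightarrow> 3 * (n + 1) < (2::nat) ^ n"
proof (induction n rule: nat_induct_at_least)
  case (Suc n)
  have "(2::nat) ^ 4 \<le> 2 ^ n" using Suc(1) by (intro power_increasing) auto
  then show ?case using Suc by simp
qed simp

lemma Suc_mul_power_ratio_less_one:
  assumes t: "4 \<le> t"
  shows "(real t + 1) * ((real t + 1) / (2 * real t)) ^ t < 1"
proof -
  have "0 < real t" using t by simp
  have "(1 + 1 / real t) ^ t \<le> exp (1 / real t) ^ t"
    using \<open>0 < real t\<close> by (intro power_mono) (auto simp: add.commute exp_ge_add_one_self)
  also have "\<dots> = exp 1" using \<open>0 < real t\<close> by (simp flip: exp_of_nat_mult)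
  also have "\<dots> \<le> 3" by (rule exp_le)
  finally have e: "(1 + 1 / real t) ^ t \<le> 3" .
  have "real (3 * (t + 1)) < real ((2::nat) ^ t)"
    using three_mul_Suc_less_two_power[OF t] by (simp only: of_nat_less_iff)
  then have "3 * (real t + 1) < 2 ^ t" by simp
  have q: "(real t + 1) / (2 * real t) = (1 + 1 / real t) / 2"
    using \<open>0 < real t\<close> by (simp add: field_simps)
  have "(real t + 1) * ((real t + 1) / (2 * real t)) ^ t = (real t + 1) * (1 + 1 / real t) ^ t / 2 ^ t"
    unfolding q by (simp add: power_divide)
  also have "\<dots> \<le> (real t + 1) * 3 / 2 ^ t"
    by (intro divide_right_mono mult_left_mono e) auto
  also have "\<dots> < 1" using \<open>3 * (real t + 1) < 2 ^ t\<close> by (simp add: field_simps)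
  finally show ?thesis .
qed

lemma alpha_F_Kplus_large:
  assumes s: "2 \<le> s" and t: "4 \<le> t"
  shows "2 * (1/2) ^ (s - 2) / real (aut (Kplus_V s t) (Kplus_E s t)) * (real t + 1)
      * ((real t + 1) / (4 * real t)) ^ t < alpha_F (Kplus_V s t) (Kplus_E s t)"
proof -
  define K where "K = 2 * (1/2) ^ (s - 2) / real (aut (Kplus_V s t) (Kplus_E s t))"
  define c :: real where "c = (1/2) ^ (s - 2) / (fact (s - 2) * fact t)"
  define r where "r = (real t + 1) * ((real t + 1) / (2 * real t)) ^ t"
  have "real (2 * fact (s - 2) * fact t) \<le> real (aut (Kplus_V s t) (Kplus_E s t))"
    using aut_Kplus_ge[OF s, of t] t by (simp only: of_nat_le_iff)
  then have aut: "2 * fact (s - 2) * fact t \<le> real (aut (Kplus_V s t) (Kplus_E s t))" by simp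
  moreover have pos: "(0::real) < 2 * fact (s - 2) * fact t" by simp
  ultimately have "0 < real (aut (Kplus_V s t) (Kplus_E s t))" by linarith
  have "K \<le> 2 * (1/2) ^ (s - 2) / (2 * fact (s - 2) * fact t)"
    unfolding K_def by (rule divide_left_mono)
      (use aut pos \<open>0 < real (aut (Kplus_V s t) (Kplus_E s t))\<close> in \<open>simp_all add: mult_pos_pos\<close>)
  then have "K \<le> c" by (simp add: c_def)
  have "K * (real t + 1) * ((real t + 1) / (4 * real t)) ^ t = K * (r * (1/2) ^ t)"
    by (simp add: r_def power_mult_distrib[symmetric] mult.assoc)
  also have "\<dots> \<le> c * (r * (1/2) ^ t)"
    using \<open>K \<le> c\<close> t by (intro mult_right_mono) (auto simp: r_def)
  also have "\<dots> < c * (1/2) ^ t"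
  proof (rule mult_strict_left_mono)
    have "r < 1" unfolding r_def by (rule Suc_mul_power_ratio_less_one[OF t])
    then show "r * (1/2) ^ t < (1/2) ^ t" by simp
  qed (simp add: c_def)
  also have "\<dots> = alpha_F (Kplus_V s t) (Kplus_E s t)"
    using s t by (simp add: alpha_F_Kplus c_def)
  finally show ?thesis unfolding K_def .
qed

theorem lemma8:
  fixes s t :: nat
  assumes "s \<ge> 2" and "t \<ge> 2"
  shows "rho_F (Kplus_V s t) (Kplus_E s t) = rho_hat_F (Kplus_V s t) (Kplus_E s t)"
proof -
  define K where "K = 2 * (1/2) ^ (s - 2) / real (aut (Kplus_V s t) (Kplus_E s t))"
  define \<alpha> where "\<alpha> = alpha_F (Kplus_V s t) (Kplus_E s t)"
  have "(0::nat) < 2 * fact (s - 2) * fact t" by simp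
  then have "0 < aut (Kplus_V s t) (Kplus_E s t)" using aut_Kplus_ge[OF assms] by (rule less_le_trans)
  then have "0 < K" by (simp add: K_def)
  moreover have "K * (real t + 1) * ((real t + 1) / (4 * real t)) ^ t < \<alpha>" if "4 \<le> t"
    using alpha_F_Kplus_large[OF assms(1) that] by (simp add: K_def \<alpha>_def)
  ultimately interpret kplus_profile K \<alpha> t using assms(2) by unfold_locales
  have "P_F (Kplus_V s t) (Kplus_E s t) = P"
    unfolding P_def by (intro ext) (simp add: P_F_Kplus[OF assms] K_def)
  then show ?thesis
    using ereal_inf_level_sets_eq
    unfolding rho_F_def rho_hat_F_def p_F_eq_segment_inf \<alpha>_def[symmetric] by simp
qed

end
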